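(* For all integers $a,b,c,d,e$: $$(F_{d-a}F_{e-b}-F_{e-a}F_{d-b})F_{b-c}=(F_{d-c}F_{e-b}-F_{e-c}F_{d-b})F_{b-a},$$ $$(J_{d-a}J_{e-b}-J_{e-a}J_{d-b})J_{b-c}=(J_{d-c}J_{e-b}-J_{e-c}J_{d-b})J_{b-a},$$ $$(P_{d-a}P_{e-b}-P_{e-a}P_{d-b})P_{b-c}=(P_{d-c}P_{e-b}-P_{e-c}P_{d-b})P_{b-a}.$$
   Context: All sequences are indexed by $n\in\mathbb Z$. Fibonacci numbers $F_n$: $F_n=F_{n-1}+F_{n-2}$ for all $n\in\mathbb Z$, $F_0=0,F_1=1$ (so $F_{-n}=(-1)^{n-1}F_n$). Jacobsthal numbers $J_n$: $J_n=J_{n-1}+2J_{n-2}$ for all $n\in\mathbb Z$, $J_0=0,J_1=1$ (so $J_{-n}=(-1)^{n-1}2^{-n}J_n$, rational for negative index). Pell numbers $P_n$: $P_n=2P_{n-1}+P_{n-2}$ for all $n\in\mathbb Z$, $P_0=0,P_1=1$ (so $P_{-n}=(-1)^{n-1}P_n$). *)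

theory Defs
  imports Complex_Main
begin

fun fibn :: "nat \<Rightarrow> int" where
  "fibn 0 = 0" | "fibn (Suc 0) = 1" | "fibn (Suc (Suc n)) = fibn (Suc n) + fibn n"

fun jacn :: "nat \<Rightarrow> int" where
  "jacn 0 = 0" | "jacn (Suc 0) = 1" | "jacn (Suc (Suc n)) = jacn (Suc n) + 2 * jacn n"

fun pelln :: "nat \<Rightarrow> int" where
  "pelln 0 = 0" | "pelln (Suc 0) = 1" | "pelln (Suc (Suc n)) = 2 * pelln (Suc n) + pelln n"

text \<open>Extension to all integer indices, using the unique extension of the
recurrence backwards (as stated in the context):
F_{-n} = (-1)^(n-1) F_n, J_{-n} = (-1)^(n-1) 2^(-n) J_n, P_{-n} = (-1)^(n-1) P_n.\<close>

definition F :: "int \<Rightarrow> int" where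
  "F n = (if n \<ge> 0 then fibn (nat n) else (-1) ^ (nat (-n) - 1) * fibn (nat (-n)))"

definition J :: "int \<Rightarrow> real" where
  "J n = (if n \<ge> 0 then real_of_int (jacn (nat n))
          else (-1) ^ (nat (-n) - 1) * real_of_int (jacn (nat (-n))) / 2 ^ nat (-n))"

definition P :: "int \<Rightarrow> int" where
  "P n = (if n \<ge> 0 then pelln (nat n) else (-1) ^ (nat (-n) - 1) * pelln (nat (-n)))"

end

theory Submission
  imports Defs
begin

text \<open>Each of the three sequences is the Lucas sequence \<open>U\<^sub>n = (x\<^sup>n - y\<^sup>n)/(x - y)\<close>
of a pair of distinct nonzero roots \<open>x, y\<close> (\<open>(1 \<plusminus> \<surd>5)/2\<close>, \<open>2, -1\<close> and \<open>1 \<plusminus> \<surd>2\<close>),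
and this Binet form holds for negative indices as well. After substituting it, both sides
of the identity become rational functions in the powers \<open>x\<^sup>a, \<dots>, y\<^sup>e\<close>, and the identity
is checked by clearing denominators.\<close>

definition lucas_u :: "'a::field \<Rightarrow> 'a \<Rightarrow> int \<Rightarrow> 'a" where
  "lucas_u x y n = (x powi n - y powi n) / (x - y)"

lemma lucas_u_of_nat: "lucas_u x y (int n) = (x ^ n - y ^ n) / (x - y)"
  by (simp add: lucas_u_def)

lemma lucas_u_uminus:
  assumes "x \<noteq> 0" "y \<noteq> 0"
  shows "lucas_u x y (- int n) = - lucas_u x y (int n) / (x * y) ^ n"
  using assms
  by (simp add: lucas_u_def power_int_minus field_simps power_mult_distrib)
     (simp add: divide_simps; simp add: algebra_simps)

lemma lucas_u_minus_Suc:
  assumes "x * y = - q" "x \<noteq> 0" "y \<noteq> 0"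
  shows "lucas_u x y (- int (Suc k)) = (-1) ^ k * lucas_u x y (int (Suc k)) / q ^ Suc k"
  unfolding lucas_u_uminus[OF assms(2,3)] assms(1) by (simp add: power_minus[of q] divide_simps)

lemma binet_formula:
  fixes s :: "nat \<Rightarrow> 'a::field"
  assumes "s 0 = 0" "s 1 = 1"
    and recurrence: "\<And>n. s (Suc (Suc n)) = (x + y) * s (Suc n) - x * y * s n"
    and "x \<noteq> y"
  shows "s n = lucas_u x y (int n)"
  unfolding lucas_u_of_nat
proof (induction n rule: induct_nat_012)
  case (ge2 n)
  show ?case
    unfolding recurrence ge2.IH using \<open>x \<noteq> y\<close>
    by (simp add: divide_simps) (simp add: algebra_simps)
qed (use assms in simp_all)

lemma lucas_u_identity:
  fixes x y :: "'a::field"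
  assumes "x \<noteq> 0" "y \<noteq> 0" "x \<noteq> y"
  shows "(lucas_u x y (d-a) * lucas_u x y (e-b) - lucas_u x y (e-a) * lucas_u x y (d-b)) * lucas_u x y (b-c)
       = (lucas_u x y (d-c) * lucas_u x y (e-b) - lucas_u x y (e-c) * lucas_u x y (d-b)) * lucas_u x y (b-a)"
  using assms by (simp add: lucas_u_def power_int_diff divide_simps) (simp add: algebra_simps)

lemma lucas_u_identity_of_int:
  fixes s :: "int \<Rightarrow> int" and x y :: "'a::field_char_0"
  assumes s_eq: "\<And>n. of_int (s n) = lucas_u x y n" and "x \<noteq> 0" "y \<noteq> 0" "x \<noteq> y"
  shows "(s (d-a) * s (e-b) - s (e-a) * s (d-b)) * s (b-c) = (s (d-c) * s (e-b) - s (e-c) * s (d-b)) * s (b-a)"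
proof -
  have "of_int ((s (d-a) * s (e-b) - s (e-a) * s (d-b)) * s (b-c))
      = (of_int ((s (d-c) * s (e-b) - s (e-c) * s (d-b)) * s (b-a)) :: 'a)"
    unfolding of_int_mult of_int_diff s_eq by (rule lucas_u_identity) (use assms in simp_all)
  then show ?thesis by (simp only: of_int_eq_iff)
qed

lemma F_eq_lucas_u: "real_of_int (F n) = lucas_u ((1 + sqrt 5) / 2) ((1 - sqrt 5) / 2) n"
proof -
  let ?x = "(1 + sqrt 5) / 2 :: real" and ?y = "(1 - sqrt 5) / 2 :: real"
  have xy: "?x * ?y = -1" by (simp add: field_simps)
  have sum: "?x + ?y = 1" by (simp add: field_simps)
  have fib: "real_of_int (fibn k) = lucas_u ?x ?y (int k)" for k
    by (rule binet_formula) (use xy sum in simp_all)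
  show ?thesis
  proof (cases n)
    case (nonneg k)
    then show ?thesis by (simp add: F_def fib)
  next
    case (neg k)
    have nonzero: "?x \<noteq> 0" "?y \<noteq> 0" using xy by auto
    have "lucas_u ?x ?y n = (-1) ^ k * real_of_int (fibn (Suc k))"
      unfolding neg lucas_u_minus_Suc[OF xy nonzero] fib by simp
    then show ?thesis using neg by (simp add: F_def nat_add_distrib)
  qed
qed

lemma P_eq_lucas_u: "real_of_int (P n) = lucas_u (1 + sqrt 2) (1 - sqrt 2) n"
proof -
  let ?x = "1 + sqrt 2 :: real" and ?y = "1 - sqrt 2 :: real"
  have xy: "?x * ?y = -1" by (simp add: field_simps)
  have sum: "?x + ?y = 2" by simp
  have pell: "real_of_int (pelln k) = lucas_u ?x ?y (int k)" for k
    by (rule binet_formula) (use xy sum in simp_all)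
  show ?thesis
  proof (cases n)
    case (nonneg k)
    then show ?thesis by (simp add: P_def pell)
  next
    case (neg k)
    have nonzero: "?x \<noteq> 0" "?y \<noteq> 0" using xy by auto
    have "lucas_u ?x ?y n = (-1) ^ k * real_of_int (pelln (Suc k))"
      unfolding neg lucas_u_minus_Suc[OF xy nonzero] pell by simp
    then show ?thesis using neg by (simp add: P_def nat_add_distrib)
  qed
qed

lemma J_eq_lucas_u: "J n = lucas_u 2 (-1) n"
proof -
  have jac: "real_of_int (jacn k) = lucas_u 2 (-1) (int k)" for k
    by (rule binet_formula) simp_all
  show ?thesis
  proof (cases n)
    case (nonneg k)
    then show ?thesis by (simp add: J_def jac)
  next
    case (neg k)
    have "lucas_u 2 (-1) n = (-1) ^ k * real_of_int (jacn (Suc k)) / 2 ^ Suc k"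
      unfolding neg jac by (rule lucas_u_minus_Suc) simp_all
    then show ?thesis using neg by (simp add: J_def nat_add_distrib)
  qed
qed

theorem corollary2:
  fixes a b c d e :: int
  shows "((F (d-a) * F (e-b) - F (e-a) * F (d-b)) * F (b-c) = (F (d-c) * F (e-b) - F (e-c) * F (d-b)) * F (b-a)) \<and>
    ((J (d-a) * J (e-b) - J (e-a) * J (d-b)) * J (b-c) = (J (d-c) * J (e-b) - J (e-c) * J (d-b)) * J (b-a)) \<and>
    ((P (d-a) * P (e-b) - P (e-a) * P (d-b)) * P (b-c) = (P (d-c) * P (e-b) - P (e-c) * P (d-b)) * P (b-a))"
proof (intro conjI)
  show "(F (d-a) * F (e-b) - F (e-a) * F (d-b)) * F (b-c) = (F (d-c) * F (e-b) - F (e-c) * F (d-b)) * F (b-a)"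
    by (rule lucas_u_identity_of_int[OF F_eq_lucas_u]) (simp_all add: add_nonneg_eq_0_iff)
  show "(J (d-a) * J (e-b) - J (e-a) * J (d-b)) * J (b-c) = (J (d-c) * J (e-b) - J (e-c) * J (d-b)) * J (b-a)"
    unfolding J_eq_lucas_u by (rule lucas_u_identity[of "2::real" "-1"]) simp_all
  show "(P (d-a) * P (e-b) - P (e-a) * P (d-b)) * P (b-c) = (P (d-c) * P (e-b) - P (e-c) * P (d-b)) * P (b-a)"
    by (rule lucas_u_identity_of_int[OF P_eq_lucas_u]) (simp_all add: add_nonneg_eq_0_iff)
qed

end
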